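(* Let $k=\mathbb{F}_q$ with $q$ a power of $2$. Let $S$ be the set of monic irreducible polynomials of degree $7$ in $k[x]$ of the form $x^7+ax^3+bx+c$ with $a,b,c\in k$, let $S_0\subseteq S$ be those dividing $x^{q^3}+x^q+x$, and $S_1\subseteq S$ those dividing $x^{q^3}+x^{q^2}+x$. Then $$(x^{q^3}+x^q+x)(x^{q^3}+x^{q^2}+x)=x^2\prod_{f\in S}f(x),$$ and $|S_0|=|S_1|=(q^3-1)/7$. *)

theory Defs
  imports "HOL-Computational_Algebra.Polynomial" "HOL-Computational_Algebra.Polynomial_Factorial"
begin

definition S_set :: "'a::field poly set" where
  "S_set = {f. irreducible f \<and>
     (\<exists>a b c. f = monom 1 7 + monom a 3 + monom b 1 + [:c:])}"

definition P0 :: "nat \<Rightarrow> 'a::field poly" where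
  "P0 q = monom 1 (q^3) + monom 1 q + monom 1 1"

definition P1 :: "nat \<Rightarrow> 'a::field poly" where
  "P1 q = monom 1 (q^3) + monom 1 (q^2) + monom 1 1"

end

(*
  Let K be the algebraic closure of F_q and write frob k z = z^(q^k).  The roots of
  x^(q^3) + x^q + x and x^(q^3) + x^(q^2) + x in K are the z with frob 3 z = frob 1 z + z,
  resp. frob 3 z = frob 2 z + z; both polynomials have derivative 1, so each has q^3 simple
  roots, and 0 is their only common root.  Since x^3 + x + 1 and x^3 + x^2 + 1 divide x^7 - 1
  over F_2, a nonzero root z satisfies frob 7 z = z and frob 1 z ~= z, so its orbit consists of
  seven distinct conjugates: the nonzero elements of the F_2-span of z, frob 1 z, frob 2 z.  The
  vanishing polynomial of a 3-dimensional F_2-space is x^8 + A x^4 + B x^2 + C x, so the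
  minimal polynomial of z is x^7 + A x^3 + B x + C and lies in S.  Conversely, for f in S the
  roots of x f(x) are closed under addition, so for a root z of f also z + frob 1 z is a
  conjugate frob k z; only k = 3 and k = 5 are compatible with seven distinct conjugates, and
  they give back the two relations above.  Hence the root sets of the members of S partition
  the nonzero roots of the two trinomials, which gives the product formula and, counting
  roots, the number (q^3 - 1)/7 of factors of each trinomial.
*)

theory Submission
  imports Defs "HOL-Algebra.Algebraic_Closure_Type" "HOL-Number_Theory.Residues"
begin

hide_const (open) UnivPoly.coeff UnivPoly.monom Divisibility.prime Divisibility.irreducible
  Polynomials.degree Polynomials.lead_coeff module.smult

section \<open>Finite fields and prime characteristic\<close>

lemma CHAR_eq_prime_if_card_eq_power:
  assumes "card (UNIV :: 'a::{field,finite} set) = p ^ m" and "prime p"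
  shows "CHAR('a) = p"
proof -
  have "prime CHAR('a)"
    by (intro prime_CHAR_semidom finite_imp_CHAR_pos) simp
  moreover have "CHAR('a) dvd p ^ m"
    using CHAR_dvd_CARD[where ?'a = 'a] assms(1) by simp
  ultimately show ?thesis
    using assms(2) by (metis prime_dvd_power primes_dvd_imp_eq)
qed

lemma power_card_UNIV_eq_self:
  fixes x :: "'a::{field,finite}"
  shows "x ^ card (UNIV :: 'a set) = x"
proof (cases "x = 0")
  case False
  define U where "U = UNIV - {0 :: 'a}"
  have "x ^ card U * (\<Prod>y\<in>U. y) = (\<Prod>y\<in>U. x * y)"
    by (simp add: prod.distrib)
  also have "\<dots> = (\<Prod>y\<in>U. y)"
    unfolding U_def
    by (rule prod.reindex_bij_witness[of _ "\<lambda>y. y / x" "\<lambda>y. x * y"]) (use False in auto)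
  finally have "x ^ card U = 1"
    by (simp add: U_def)
  moreover have "card (UNIV :: 'a set) = Suc (card U)"
    using finite_UNIV_card_ge_0[where ?'a = 'a] by (simp add: U_def card_Diff_singleton)
  ultimately show ?thesis
    by simp
qed (simp add: finite_UNIV_card_ge_0)

lemma power_CHAR_power_eqD:
  fixes x y :: "'b::idom"
  assumes "prime CHAR('b)" and "x ^ CHAR('b) ^ n = y ^ CHAR('b) ^ n"
  shows "x = y"
proof -
  have "x ^ CHAR('b) ^ n = (x - y) ^ CHAR('b) ^ n + y ^ CHAR('b) ^ n"
    using freshmans_dream'[OF assms(1) refl, of "x - y" y] by simp
  with assms(2) show ?thesis
    by simp
qed

lemma char2_power2_power_add:
  fixes u v :: "'r::comm_semiring_1"
  assumes "CHAR('r) = 2"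
  shows "(u + v) ^ 2 ^ k = u ^ 2 ^ k + v ^ 2 ^ k"
  using assms by (intro freshmans_dream') simp_all

section \<open>Vanishing polynomials of small subspaces in characteristic 2\<close>

lemma char2_prod_span2:
  fixes y a b :: "'r::comm_ring_1"
  assumes "CHAR('r) = 2"
  shows "y * (y + a) * (y + b) * (y + (a + b)) =
    y ^ 4 + (a^2 + a*b + b^2) * y^2 + (a^2*b + a*b^2) * y"
proof -
  have "(2::'r) = 0"
    using of_nat_CHAR[where ?'a = 'r] assms by simp
  moreover have "y * (y + a) * (y + b) * (y + (a + b)) =
      y ^ 4 + (a^2 + a*b + b^2) * y^2 + (a^2*b + a*b^2) * y + 2 * ((a + b) * y^3 + a * b * y^2)"
    by (simp add: algebra_simps power2_eq_square power3_eq_cube power4_eq_xxxx)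
  ultimately show ?thesis
    by simp
qed

lemma char2_prod_span3:
  fixes y a b c :: "'r::comm_ring_1"
  assumes "CHAR('r) = 2"
  defines "s \<equiv> a^2 + a*b + b^2" and "t \<equiv> a^2*b + a*b^2"
    and "d \<equiv> c^4 + (a^2 + a*b + b^2) * c^2 + (a^2*b + a*b^2) * c"
  shows "y * ((y+a) * (y+b) * (y+c) * (y+(a+b)) * (y+(b+c)) * (y+(a+b+c)) * (y+(a+c))) =
    y * (y^7 + (s^2 + d) * y^3 + (t^2 + s*d) * y + t*d)"
proof -
  \<comment> \<open>\<open>L\<close> vanishes exactly on the span of \<open>a, b\<close> and is additive, so the span of \<open>a, b, c\<close>
      contributes \<open>L y * L (y + c) = L y * (L y + L c)\<close>\<close>
  define L where "L u = u^4 + s * u^2 + t * u" for u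
  have square: "(u + v) ^ 2 = u ^ 2 + v ^ 2" for u v :: 'r
    using char2_power2_power_add[OF assms(1), of u v 1] by simp
  have fourth: "(u + v) ^ 4 = u ^ 4 + v ^ 4" for u v :: 'r
    using char2_power2_power_add[OF assms(1), of u v 2] by simp
  have L_prod: "u * (u + a) * (u + b) * (u + (a + b)) = L u" for u
    unfolding L_def s_def t_def by (rule char2_prod_span2[OF assms(1)])
  have L_add: "L (u + v) = L u + L v" for u v
    by (simp add: L_def square fourth distrib_left ac_simps)
  have "y * ((y+a) * (y+b) * (y+c) * (y+(a+b)) * (y+(b+c)) * (y+(a+b+c)) * (y+(a+c))) =
      (y * (y + a) * (y + b) * (y + (a + b))) *
      ((y + c) * ((y + c) + a) * ((y + c) + b) * ((y + c) + (a + b)))"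
    by (simp add: ac_simps)
  also have "\<dots> = L y * L (y + c)"
    by (simp only: L_prod)
  also have "\<dots> = L y * (L y + d)"
    by (simp only: L_add) (simp add: L_def d_def s_def t_def)
  also have "\<dots> = L y ^ 2 + d * L y"
    by (simp add: algebra_simps power2_eq_square)
  also have "L y ^ 2 = y ^ 8 + s^2 * y^4 + t^2 * y^2"
    by (simp add: L_def square power_mult_distrib flip: power_mult)
  finally show ?thesis
    by (simp add: L_def algebra_simps eval_nat_numeral)
qed

abbreviation S_poly :: "'b \<Rightarrow> 'b \<Rightarrow> 'b \<Rightarrow> 'b::comm_semiring_1 poly" where
  "S_poly a b c \<equiv> monom 1 7 + monom a 3 + monom b 1 + [:c:]"

lemma char2_span3_prod_eq_S_poly:
  fixes a b c :: "'b::comm_ring_1"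
  assumes "CHAR('b) = 2"
  shows "\<exists>A B C. [:a,1:] * [:b,1:] * [:c,1:] * [:a+b,1:] * [:b+c,1:] * [:a+b+c,1:] * [:a+c,1:] =
    S_poly A B C"
proof -
  define x :: "'b poly" where "x = [:0, 1:]"
  have lin: "[:u, 1:] = x + [:u:]" for u
    by (simp add: x_def)
  obtain A B C where "x * ([:a,1:] * [:b,1:] * [:c,1:] * [:a+b,1:] * [:b+c,1:] * [:a+b+c,1:] * [:a+c,1:]) =
      x * (x^7 + [:A:] * x^3 + [:B:] * x + [:C:])"
    using char2_prod_span3[of x "[:a:]" "[:b:]" "[:c:]"] assms
    unfolding lin by (simp add: poly_const_pow)
  hence "[:a,1:] * [:b,1:] * [:c,1:] * [:a+b,1:] * [:b+c,1:] * [:a+b+c,1:] * [:a+c,1:] =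
      x^7 + [:A:] * x^3 + [:B:] * x + [:C:]"
    by (simp add: x_def)
  also have "\<dots> = monom 1 7 + monom A 3 + monom B 1 + [:C:]"
    by (simp add: x_def monom_altdef)
  finally show ?thesis
    by blast
qed

lemma degree_S_poly [simp]: "degree (S_poly a b c :: 'b::{comm_semiring_1,zero_neq_one} poly) = 7"
proof -
  have "degree (monom a 3 + monom b 1 + [:c:] :: 'b poly) < 7"
    by (intro degree_add_less degree_monom_le[THEN le_less_trans]) auto
  thus ?thesis
    by (subst add.assoc, subst add.assoc, subst degree_add_eq_left)
       (simp_all add: degree_monom_eq add.assoc)
qed

lemma lead_coeff_S_poly [simp]: "lead_coeff (S_poly a b c :: 'b::{comm_semiring_1,zero_neq_one} poly) = 1"
  by (subst degree_S_poly) (simp add: coeff_monom coeff_pCons split: nat.split)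

lemma char2_S_poly_roots_add:
  fixes a b c u v :: "'b::field"
  assumes "CHAR('b) = 2"
    and "poly (S_poly a b c) u = 0" and "poly (S_poly a b c) v = 0" and "u + v \<noteq> 0"
  shows "poly (S_poly a b c) (u + v) = 0"
proof -
  define L where "L y = y ^ 2 ^ 3 + a * y ^ 2 ^ 2 + b * y ^ 2 ^ 1 + c * y" for y :: 'b
  have L: "L y = y * poly (S_poly a b c) y" for y
    by (simp add: L_def poly_monom algebra_simps eval_nat_numeral)
  have "L (u + v) = L u + L v"
    by (simp only: L_def char2_power2_power_add[OF assms(1)]) (simp add: algebra_simps)
  hence "(u + v) * poly (S_poly a b c) (u + v) = 0"
    using assms(2,3) by (simp add: L)
  thus ?thesis
    using assms(4) by simp
qed

section \<open>Polynomials and the algebraic closure\<close>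

lemma monic_dvd_same_degree_eq:
  fixes f g :: "'b::idom poly"
  assumes "f dvd g" and "lead_coeff f = 1" and "lead_coeff g = 1" and "degree f = degree g"
  shows "f = g"
proof -
  obtain r where r: "g = f * r"
    using assms(1) by (elim dvdE)
  have "f \<noteq> 0" and "r \<noteq> 0"
    using assms(3) r by auto
  hence "degree r = 0"
    using r assms(4) by (simp add: degree_mult_eq)
  then obtain c where "r = [:c:]"
    by (elim degree_eq_zeroE)
  moreover have "c = 1"
    using assms(2,3) r \<open>r = [:c:]\<close> by (simp add: lead_coeff_mult split: if_splits)
  ultimately show ?thesis
    using r by simp
qed

lemma monic_separable_eq_prod_roots:
  fixes p :: "'b::alg_closed_field poly"
  assumes "lead_coeff p = 1" and "\<And>z. poly p z = 0 \<Longrightarrow> poly (pderiv p) z \<noteq> 0"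
  shows "p = (\<Prod>z | poly p z = 0. [:-z, 1:])" and "card {z. poly p z = 0} = degree p"
proof -
  have "p \<noteq> 0"
    using assms(1) by auto
  then obtain A where A: "size A = degree p" "p = (\<Prod>x\<in>#A. [:-x, 1:])"
    using alg_closed_imp_factorization[of p] assms(1) by auto
  have roots: "{z. poly p z = 0} = set_mset A"
    by (subst A(2)) (auto simp: poly_prod_mset)
  have count_le_1: "count A x \<le> 1" for x
  proof (rule ccontr)
    assume "\<not> count A x \<le> 1"
    then have "x \<in># A"
      by (simp flip: count_greater_zero_iff)
    then obtain A' where A': "A = add_mset x A'"
      by (blast dest: multi_member_split)
    with \<open>\<not> count A x \<le> 1\<close> have "x \<in># A'"
      by (simp flip: count_greater_zero_iff)
    then obtain B where B: "A = add_mset x (add_mset x B)"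
      using A' by (blast dest: multi_member_split)
    define l where "l = [:-x, 1:]"
    have "p = l * (l * (\<Prod>y\<in>#B. [:-y, 1:]))"
      using A(2) B by (simp add: l_def mult.assoc)
    moreover have "poly l x = 0"
      by (simp add: l_def)
    ultimately have "poly p x = 0" and "poly (pderiv p) x = 0"
      by (simp_all add: pderiv_mult)
    with assms(2) show False
      by blast
  qed
  have "A = mset_set (set_mset A)"
  proof (rule multiset_eqI)
    show "count A x = count (mset_set (set_mset A)) x" for x
      using count_le_1[of x] by (cases "x \<in># A") (simp_all add: not_in_iff flip: count_greater_zero_iff)
  qed
  hence "p = (\<Prod>z\<in>set_mset A. [:-z, 1:])" and "degree p = card (set_mset A)"
    using A by (simp_all add: prod_unfold_prod_mset) (metis size_mset_set)
  with roots show "p = (\<Prod>z | poly p z = 0. [:-z, 1:])" and "card {z. poly p z = 0} = degree p"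
    by simp_all
qed

lemma map_poly_hom_add:
  assumes "h 0 = 0" and "\<And>a b. h (a + b) = h a + h b"
  shows "map_poly h (p + r) = map_poly h p + map_poly h r"
  by (rule poly_eqI) (simp add: coeff_map_poly assms)

lemma map_poly_hom_mult:
  fixes h :: "'b::comm_semiring_1 \<Rightarrow> 'c::comm_semiring_1"
  assumes "h 0 = 0" and "\<And>a b. h (a + b) = h a + h b" and "\<And>a b. h (a * b) = h a * h b"
  shows "map_poly h (p * r) = map_poly h p * map_poly h r"
  by (rule poly_eqI)
     (simp add: coeff_map_poly coeff_mult assms flip: sum_comp_morphism[of h, OF assms(1,2)])

lemma map_poly_hom_prod:
  fixes h :: "'b::comm_semiring_1 \<Rightarrow> 'c::comm_semiring_1"
  assumes "h 0 = 0" and "h 1 = 1"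
    and "\<And>a b. h (a + b) = h a + h b" and "\<And>a b. h (a * b) = h a * h b"
  shows "map_poly h (\<Prod>x\<in>A. g x) = (\<Prod>x\<in>A. map_poly h (g x))"
  by (induction A rule: infinite_finite_induct) (simp_all add: assms map_poly_hom_mult)

abbreviation to_ac_poly :: "'a::field poly \<Rightarrow> 'a alg_closure poly" where
  "to_ac_poly \<equiv> map_poly to_ac"

lemma to_ac_poly_add: "to_ac_poly (p + r) = to_ac_poly p + to_ac_poly r"
  by (rule map_poly_hom_add) simp_all

lemma to_ac_poly_mult: "to_ac_poly (p * r) = to_ac_poly p * to_ac_poly r"
  by (rule map_poly_hom_mult) simp_all

lemma to_ac_poly_prod: "to_ac_poly (\<Prod>x\<in>A. g x) = (\<Prod>x\<in>A. to_ac_poly (g x))"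
  by (rule map_poly_hom_prod) simp_all

lemma to_ac_poly_monom: "to_ac_poly (monom c n) = monom (to_ac c) n"
  by (simp add: map_poly_monom)

lemma to_ac_poly_eq_iff [simp]: "to_ac_poly p = to_ac_poly r \<longleftrightarrow> p = r"
  by (metis coeff_map_poly poly_eqI to_ac_0 to_ac_eq_iff)

lemma to_ac_poly_eq_0_iff [simp]: "to_ac_poly p = 0 \<longleftrightarrow> p = 0"
  using to_ac_poly_eq_iff[of p 0] by (simp del: to_ac_poly_eq_iff)

lemma degree_to_ac_poly [simp]: "degree (to_ac_poly p) = degree p"
  by (rule degree_map_poly) simp

definition ac_roots :: "'a::field poly \<Rightarrow> 'a alg_closure set" where
  "ac_roots p = {z. poly (to_ac_poly p) z = 0}"

lemma finite_ac_roots: "p \<noteq> 0 \<Longrightarrow> finite (ac_roots p)"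
  using poly_roots_finite[of "to_ac_poly p"] by (simp add: ac_roots_def)

lemma card_ac_roots_le_degree: "p \<noteq> 0 \<Longrightarrow> card (ac_roots p) \<le> degree p"
  using card_poly_roots_bound[of "to_ac_poly p"] by (simp add: ac_roots_def)

lemma ac_roots_mono_dvd: "f dvd g \<Longrightarrow> ac_roots f \<subseteq> ac_roots g"
  by (auto simp: ac_roots_def to_ac_poly_mult elim!: dvdE)

lemma minimal_polynomial_exists:
  fixes z :: "'a::field alg_closure"
  assumes "p \<noteq> 0" and "poly (to_ac_poly p) z = 0"
  obtains h where "irreducible h" "lead_coeff h = 1" "poly (to_ac_poly h) z = 0"
    "\<And>g. poly (to_ac_poly g) z = 0 \<Longrightarrow> h dvd g"
proof -
  define vanishing where "vanishing g \<longleftrightarrow> g \<noteq> 0 \<and> poly (to_ac_poly g) z = 0"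
    for g :: "'a poly"
  define n where "n = (LEAST n. \<exists>g. vanishing g \<and> degree g = n)"
  obtain h0 where h0: "vanishing h0" "degree h0 = n"
    using LeastI_ex[of "\<lambda>n. \<exists>g. vanishing g \<and> degree g = n"] assms
    unfolding n_def vanishing_def by blast
  have n_le: "n \<le> degree g" if "vanishing g" for g
    unfolding n_def using that by (auto intro: Least_le)
  define h where "h = smult (inverse (lead_coeff h0)) h0"
  have h: "h \<noteq> 0" "lead_coeff h = 1" "degree h = n" "poly (to_ac_poly h) z = 0"
    using h0 by (auto simp: h_def vanishing_def map_poly_smult)
  have h_dvd: "h dvd g" if "poly (to_ac_poly g) z = 0" for g
  proof -
    have "to_ac_poly g = to_ac_poly (g div h) * to_ac_poly h + to_ac_poly (g mod h)"
      by (simp flip: to_ac_poly_mult to_ac_poly_add)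
    hence "poly (to_ac_poly (g mod h)) z = 0"
      using that h(4) by simp
    moreover have "g mod h = 0 \<or> degree (g mod h) < n"
      using degree_mod_less'[OF h(1)] h(3) by blast
    ultimately have "g mod h = 0"
      using n_le by (force simp: vanishing_def)
    thus ?thesis
      by (simp add: mod_0_imp_dvd)
  qed
  have "irreducible h"
  proof (rule Factorial_Ring.irreducibleI)
    show "h \<noteq> 0" by (fact h(1))
    show "\<not> is_unit h"
      using h(1,4) by (auto simp: is_unit_poly_iff map_poly_pCons)
  next
    fix a b assume ab: "h = a * b"
    hence "poly (to_ac_poly a) z = 0 \<or> poly (to_ac_poly b) z = 0"
      using h(4) by (simp add: to_ac_poly_mult)
    hence "h dvd a \<or> h dvd b"
      using h_dvd by blast
    with ab h(1) show "is_unit a \<or> is_unit b"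
      by (metis dvd_mult_cancel_left dvd_mult_cancel_right mult_cancel_left1 mult_cancel_right1
          dvd_triv_left dvd_triv_right)
  qed
  with h h_dvd show ?thesis
    using that by blast
qed

lemma irreducible_dvd_if_common_root:
  fixes f g :: "'a::field poly"
  assumes "irreducible f" and "poly (to_ac_poly f) z = 0" and "poly (to_ac_poly g) z = 0"
  shows "f dvd g"
proof -
  have "f \<noteq> 0"
    using assms(1) by auto
  then obtain h where h: "irreducible h" "poly (to_ac_poly h) z = 0"
      "\<And>g. poly (to_ac_poly g) z = 0 \<Longrightarrow> h dvd g"
    using minimal_polynomial_exists assms(2) by blast
  obtain k where k: "f = h * k"
    using h(3) assms(2) by blast
  have "is_unit k"
    using Factorial_Ring.irreducibleD[OF assms(1) k] Factorial_Ring.irreducible_not_unit[OF h(1)]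
    by blast
  hence "f dvd h"
    using k by (simp add: mult_unit_dvd_iff)
  thus ?thesis
    using h(3)[OF assms(3)] by (rule dvd_trans)
qed

lemma to_ac_poly_S_poly: "to_ac_poly (S_poly a b c) = S_poly (to_ac a) (to_ac b) (to_ac c)"
  by (simp add: to_ac_poly_add to_ac_poly_monom map_poly_pCons)

lemma to_ac_poly_eq_S_poly_imp:
  assumes "to_ac_poly f = S_poly A B C"
  shows "f = S_poly (coeff f 3) (coeff f 1) (coeff f 0)"
proof -
  have "A = to_ac (coeff f 3)" "B = to_ac (coeff f 1)" "C = to_ac (coeff f 0)"
    using arg_cong[OF assms, of "\<lambda>p. coeff p 3"] arg_cong[OF assms, of "\<lambda>p. coeff p 1"]
      arg_cong[OF assms, of "\<lambda>p. coeff p 0"]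
    by (simp_all add: coeff_map_poly coeff_monom coeff_pCons split: nat.split)
  hence "to_ac_poly (S_poly (coeff f 3) (coeff f 1) (coeff f 0)) = to_ac_poly f"
    using assms by (simp only: to_ac_poly_S_poly)
  thus ?thesis
    by simp
qed

lemma finite_S_set: "finite (S_set :: 'a::{field,finite} poly set)"
proof (rule finite_subset)
  show "S_set \<subseteq> (\<lambda>(a, b, c). S_poly a b c) ` UNIV"
    unfolding S_set_def by (auto intro!: image_eqI[where x = "(_, _, _)"])
qed simp

lemma S_set_degree:
  assumes "f \<in> S_set"
  shows "degree f = 7" and "coeff f 7 = 1"
proof -
  obtain a b c where "f = S_poly a b c"
    using assms by (auto simp: S_set_def)
  thus "degree f = 7" and "coeff f 7 = 1"
    using lead_coeff_S_poly[of a b c] by (simp_all only: degree_S_poly)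
qed

lemma S_set_nonzero: "f \<in> S_set \<Longrightarrow> f \<noteq> 0"
  by (metis S_set_degree(2) coeff_0 zero_neq_one)

lemma S_set_common_root_eq:
  assumes "(f :: 'a::field poly) \<in> S_set" and "g \<in> S_set"
    and "z \<in> ac_roots f" and "z \<in> ac_roots g"
  shows "f = g"
proof (rule monic_dvd_same_degree_eq)
  show "f dvd g"
    using assms by (intro irreducible_dvd_if_common_root[of f z]) (auto simp: S_set_def ac_roots_def)
qed (simp_all add: S_set_degree[OF assms(1)] S_set_degree[OF assms(2)])

section \<open>Frobenius orbits over a finite field\<close>

locale finite_field_closure =
  fixes ty :: "'a::{field,finite} itself" and q :: nat
  assumes q_eq_card: "q = card (UNIV :: 'a set)"
    and q_CHAR_power: "\<exists>e. q = CHAR('a) ^ e"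
begin

definition frob :: "nat \<Rightarrow> 'a alg_closure \<Rightarrow> 'a alg_closure" where
  "frob k z = z ^ q ^ k"

lemma one_less_q: "1 < q"
proof -
  have "card {0, 1 :: 'a} \<le> q"
    unfolding q_eq_card by (rule card_mono) auto
  thus ?thesis
    by simp
qed

lemma frob_0 [simp]: "frob 0 z = z"
  by (simp add: frob_def)

lemma frob_zero [simp]: "frob k 0 = 0"
  using one_less_q by (simp add: frob_def)

lemma frob_one [simp]: "frob k 1 = 1"
  by (simp add: frob_def)

lemma frob_mult: "frob k (x * y) = frob k x * frob k y"
  by (simp add: frob_def power_mult_distrib)

lemma prime_CHAR_closure: "prime CHAR('a alg_closure)"
  by (simp add: prime_CHAR_semidom finite_imp_CHAR_pos)

lemma q_power_eq_CHAR_power: obtains n where "q ^ k = CHAR('a alg_closure) ^ n"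
proof -
  obtain e where "q = CHAR('a) ^ e"
    using q_CHAR_power by blast
  thus ?thesis
    using that[of "e * k"] by (simp add: power_mult)
qed

lemma frob_add: "frob k (x + y) = frob k x + frob k y"
proof -
  obtain n where "q ^ k = CHAR('a alg_closure) ^ n"
    by (rule q_power_eq_CHAR_power)
  thus ?thesis
    unfolding frob_def by (intro freshmans_dream' prime_CHAR_closure)
qed

lemma frob_minus: "frob k (- x) = - frob k x"
  using frob_add[of k x "- x"] by (simp add: add_eq_0_iff)

lemma frob_frob: "frob i (frob j z) = frob (i + j) z"
  by (simp add: frob_def power_add mult.commute flip: power_mult)

lemma frob_eq_iff [simp]: "frob k x = frob k y \<longleftrightarrow> x = y"
proof
  obtain n where n: "q ^ k = CHAR('a alg_closure) ^ n"
    by (rule q_power_eq_CHAR_power)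
  assume "frob k x = frob k y"
  hence "x ^ CHAR('a alg_closure) ^ n = y ^ CHAR('a alg_closure) ^ n"
    by (simp only: frob_def n)
  thus "x = y"
    by (rule power_CHAR_power_eqD[OF prime_CHAR_closure])
qed simp

lemma frob_eq_0_iff [simp]: "frob k x = 0 \<longleftrightarrow> x = 0"
  using frob_eq_iff[of k x 0] by simp

lemma frob_to_ac [simp]: "frob k (to_ac c) = to_ac c"
proof -
  have "c ^ q ^ k = c"
    by (induction k) (simp_all add: power_mult q_eq_card power_card_UNIV_eq_self)
  thus ?thesis
    by (simp add: frob_def flip: to_ac_power)
qed

lemma poly_to_ac_poly_frob: "poly (to_ac_poly p) (frob k z) = frob k (poly (to_ac_poly p) z)"
  by (induction p) (simp_all add: map_poly_pCons frob_add frob_mult)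

lemma frob_fixed_imp_in_range:
  assumes "frob 1 z = z"
  shows "z \<in> range to_ac"
proof -
  define p :: "'a poly" where "p = monom 1 q - monom 1 1"
  have roots: "ac_roots p = {x. x ^ q = x}"
  proof -
    have "to_ac_poly p = monom 1 q - monom 1 1"
      by (rule poly_eqI) (simp add: p_def coeff_map_poly coeff_monom)
    thus ?thesis
      by (simp add: ac_roots_def poly_monom)
  qed
  have "degree p = q"
    using one_less_q unfolding p_def diff_conv_add_uminus
    by (subst degree_add_eq_left) (simp_all add: degree_monom_eq)
  hence "p \<noteq> 0"
    using one_less_q by auto
  hence fin: "finite (ac_roots p)" and card_le: "card (ac_roots p) \<le> q"
    using finite_ac_roots card_ac_roots_le_degree \<open>degree p = q\<close> by fastforce+
  have sub: "range to_ac \<subseteq> ac_roots p"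
    using frob_to_ac[of 1] by (auto simp: roots frob_def)
  have "card (range (to_ac :: 'a \<Rightarrow> _)) = q"
    by (simp add: card_image inj_to_ac q_eq_card)
  hence "range to_ac = ac_roots p"
    using card_subset_eq[OF fin sub] card_mono[OF fin sub] card_le by simp
  moreover have "z \<in> ac_roots p"
    using assms by (simp add: roots frob_def)
  ultimately show ?thesis
    by simp
qed

lemma frob_root:
  assumes "poly (to_ac_poly p) z = 0"
  shows "poly (to_ac_poly p) (frob k z) = 0"
  by (simp add: poly_to_ac_poly_frob assms)

lemma frob_eq_frob_imp_period:
  assumes "frob i z = frob j z" and "i \<le> j"
  shows "frob (j - i) z = z"
proof -
  have "frob i (frob (j - i) z) = frob i z"
    using assms by (simp add: frob_frob)
  thus ?thesis
    by simp
qed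

lemma frob_period_exists:
  assumes "p \<noteq> 0" and "poly (to_ac_poly p) z = 0"
  shows "\<exists>n>0. frob n z = z"
proof -
  have "range (\<lambda>i. frob i z) \<subseteq> ac_roots p"
    using frob_root[OF assms(2)] by (auto simp: ac_roots_def)
  moreover have "finite (ac_roots p)"
    using finite_ac_roots assms(1) by blast
  ultimately have "\<not> inj (\<lambda>i. frob i z)"
    using finite_imageD finite_subset infinite_UNIV_nat by blast
  then obtain i j where "i < j" and "frob i z = frob j z"
    by (metis linorder_inj_onI' UNIV_I)
  thus ?thesis
    using frob_eq_frob_imp_period[of i z j] by (intro exI[of _ "j - i"]) simp
qed

lemma frob_period_mult:
  assumes "frob n z = z"
  shows "frob (n * k) z = z"
proof (induction k)
  case (Suc k)
  have "frob (n * Suc k) z = frob (n * k) (frob n z)"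
    by (simp add: frob_frob add.commute)
  with Suc assms show ?case
    by simp
qed simp

lemma frob_period_gcd:
  assumes "frob a z = z" and "frob b z = z"
  shows "frob (gcd a b) z = z"
proof (cases "a = 0")
  case False
  then obtain x y where xy: "a * x = b * y + gcd a b"
    using bezout_nat by blast
  have "frob (gcd a b) z = frob (gcd a b) (frob (b * y) z)"
    using frob_period_mult[OF assms(2)] by simp
  also have "\<dots> = frob (a * x) z"
    by (simp add: frob_frob xy add.commute)
  finally show ?thesis
    using frob_period_mult[OF assms(1)] by simp
qed (use assms in simp)

lemma inj_on_frob_orbit:
  assumes "\<And>i. 0 < i \<Longrightarrow> i < n \<Longrightarrow> frob i z \<noteq> z"
  shows "inj_on (\<lambda>i. frob i z) {..<n}"
proof (rule linorder_inj_onI')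
  fix i j assume "i < j" "j \<in> {..<n}"
  thus "frob i z \<noteq> frob j z"
    using assms[of "j - i"] frob_eq_frob_imp_period[of i z j] by auto
qed

lemma frob_least_period:
  assumes "p \<noteq> 0" and "poly (to_ac_poly p) z = 0"
  obtains n where "0 < n" and "frob n z = z" and "inj_on (\<lambda>i. frob i z) {..<n}"
proof -
  define n where "n = (LEAST n. 0 < n \<and> frob n z = z)"
  have "0 < n" and "frob n z = z"
    using LeastI_ex[OF frob_period_exists[OF assms]] by (simp_all add: n_def)
  moreover have "inj_on (\<lambda>i. frob i z) {..<n}"
    by (rule inj_on_frob_orbit) (use not_less_Least in \<open>auto simp: n_def\<close>)
  ultimately show ?thesis
    using that by blast
qed

lemma orbit_prod_in_base:
  assumes "frob n z = z"
  obtains g where "to_ac_poly g = (\<Prod>i<n. [:- frob i z, 1:])"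
proof -
  define G where "G = (\<Prod>i<n. [:- frob i z, 1:])"
  \<comment> \<open>Frobenius permutes the linear factors of \<open>G\<close> cyclically, so it fixes the coefficients\<close>
  have "map_poly (frob 1) G = (\<Prod>i<n. map_poly (frob 1) [:- frob i z, 1:])"
    unfolding G_def by (rule map_poly_hom_prod) (simp_all add: frob_add frob_mult)
  also have "\<dots> = (\<Prod>i<n. [:- frob (Suc i) z, 1:])"
    by (simp add: map_poly_pCons frob_minus frob_frob)
  also have "\<dots> = G"
  proof -
    have "[:- z, 1:] * (\<Prod>i<n. [:- frob (Suc i) z, 1:]) = (\<Prod>i<Suc n. [:- frob i z, 1:])"
      by (simp only: prod.lessThan_Suc_shift frob_0)
    also have "\<dots> = [:- z, 1:] * G"
      by (simp only: prod.lessThan_Suc G_def assms mult.commute)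
    finally show ?thesis
      by (metis mult_left_cancel pCons_eq_0_iff one_neq_zero)
  qed
  finally have "map_poly (frob 1) G = G" .
  hence "coeff G i \<in> range to_ac" for i
    using frob_fixed_imp_in_range[of "coeff G i"] by (metis coeff_map_poly frob_zero)
  hence "to_ac_poly (map_poly of_ac G) = G"
    by (intro poly_eqI) (simp add: coeff_map_poly to_ac_of_ac)
  thus ?thesis
    using that unfolding G_def by blast
qed

lemma card_orbit_le_degree:
  assumes "p \<noteq> 0" and "poly (to_ac_poly p) z = 0" and "inj_on (\<lambda>i. frob i z) {..<n}"
  shows "n \<le> degree p"
proof -
  have "(\<lambda>i. frob i z) ` {..<n} \<subseteq> ac_roots p"
    using frob_root[OF assms(2)] by (auto simp: ac_roots_def)
  hence "card ((\<lambda>i. frob i z) ` {..<n}) \<le> card (ac_roots p)"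
    by (rule card_mono[OF finite_ac_roots[OF assms(1)]])
  thus ?thesis
    using card_image[OF assms(3)] card_ac_roots_le_degree[OF assms(1)] by simp
qed

lemma irreducible_to_ac_poly_eq_orbit_prod:
  assumes "irreducible f" and "poly (to_ac_poly f) z = 0"
  shows "frob (degree f) z = z" and "inj_on (\<lambda>i. frob i z) {..<degree f}"
    and "to_ac_poly f = smult (to_ac (lead_coeff f)) (\<Prod>i<degree f. [:- frob i z, 1:])"
proof -
  have "f \<noteq> 0"
    using assms(1) by auto
  obtain n where n: "0 < n" "frob n z = z" and inj: "inj_on (\<lambda>i. frob i z) {..<n}"
    using frob_least_period[OF \<open>f \<noteq> 0\<close> assms(2)] by blast
  define G where "G = (\<Prod>i<n. [:- frob i z, 1:])"
  have G: "G \<noteq> 0" "lead_coeff G = 1" "degree G = n" "poly G z = 0"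
    unfolding G_def lead_coeff_prod using n(1)
    by (auto simp: degree_prod_sum_eq poly_prod intro!: bexI[of _ 0])
  obtain g where g: "to_ac_poly g = G"
    using orbit_prod_in_base[OF n(2)] unfolding G_def by blast
  have "f dvd g"
    using irreducible_dvd_if_common_root[OF assms] g G(4) by blast
  then obtain r where r: "g = f * r"
    by (elim dvdE)
  have "r \<noteq> 0"
    using g G(1) r by auto
  have "degree f + degree r = n"
    using r g G(3) \<open>f \<noteq> 0\<close> \<open>r \<noteq> 0\<close> by (metis degree_mult_eq degree_to_ac_poly)
  moreover have "n \<le> degree f"
    by (rule card_orbit_le_degree[OF \<open>f \<noteq> 0\<close> assms(2) inj])
  ultimately have deg: "degree f = n" and "degree r = 0"
    by linarith+
  then obtain c where "r = [:c:]"
    by (elim degree_eq_zeroE)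
  hence G_eq: "G = smult (to_ac c) (to_ac_poly f)"
    using g r by (simp add: map_poly_smult)
  hence "to_ac c * to_ac (lead_coeff f) = 1"
    using G(2) by (simp add: coeff_map_poly split: if_splits)
  hence "to_ac_poly f = smult (to_ac (lead_coeff f)) G"
    using G_eq by (simp add: mult.commute)
  with n inj deg show "frob (degree f) z = z" and "inj_on (\<lambda>i. frob i z) {..<degree f}"
    and "to_ac_poly f = smult (to_ac (lead_coeff f)) (\<Prod>i<degree f. [:- frob i z, 1:])"
    by (simp_all add: G_def)
qed

end

section \<open>The two trinomials in characteristic 2\<close>

locale char2_finite_field_closure = finite_field_closure ty q
  for ty :: "'a::{field,finite} itself" and q +
  assumes CHAR_eq_2: "CHAR('a) = 2"
begin

lemma minus_eq_self [simp]: "- (x :: 'a alg_closure) = x"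
  by (rule uminus_CHAR_2) (simp add: CHAR_eq_2)

lemma add_self_eq_0 [simp]: "(x :: 'a alg_closure) + x = 0"
  using minus_eq_self[of x] by (simp only: add_eq_0_iff2)

lemma add_self_left [simp]: "(x :: 'a alg_closure) + (x + y) = y"
  by (simp flip: add.assoc)

lemma eq_iff_add_eq_0: "(x :: 'a alg_closure) = y \<longleftrightarrow> x + y = 0"
  by (metis add_self_eq_0 add_self_left add_0_right)

lemma two_eq_0 [simp]: "(2 :: 'a alg_closure) = 0"
  using of_nat_CHAR[where ?'a = "'a alg_closure"] by (simp add: CHAR_eq_2)

lemma eq_add_swap: "(x :: 'a alg_closure) = y + w \<longleftrightarrow> w = y + x"
  by auto

lemma even_q: "even q"
proof -
  obtain e where "q = 2 ^ e"
    using q_CHAR_power CHAR_eq_2 by auto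
  thus ?thesis
    using one_less_q by (cases e) auto
qed

definition trinomial :: "nat \<Rightarrow> 'a poly" where
  "trinomial j = monom 1 (q ^ 3) + monom 1 (q ^ j) + monom 1 1"

lemma P0_eq_trinomial: "P0 q = trinomial 1" and P1_eq_trinomial: "P1 q = trinomial 2"
  by (simp_all add: P0_def P1_def trinomial_def)

lemma poly_trinomial: "poly (to_ac_poly (trinomial j)) z = frob 3 z + frob j z + z"
  by (simp add: trinomial_def to_ac_poly_add to_ac_poly_monom poly_monom frob_def)

lemma ac_roots_trinomial_iff: "z \<in> ac_roots (trinomial j) \<longleftrightarrow> frob 3 z = frob j z + z"
  by (simp add: ac_roots_def poly_trinomial eq_iff_add_eq_0[of "frob 3 z"] add.assoc)

lemma trinomial_splits:
  assumes "j \<in> {1, 2}"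
  shows "to_ac_poly (trinomial j) = (\<Prod>z\<in>ac_roots (trinomial j). [:-z, 1:])"
    and "card (ac_roots (trinomial j)) = q ^ 3"
proof -
  have "1 < q ^ j"
    by (rule one_less_power) (use assms one_less_q in auto)
  moreover have "q ^ j < q ^ 3"
    by (rule power_strict_increasing) (use assms one_less_q in auto)
  ultimately have deg: "degree (trinomial j) = q ^ 3" and lead: "lead_coeff (trinomial j) = 1"
    unfolding trinomial_def by (simp_all add: degree_add_eq_left degree_monom_eq coeff_monom)
  have "of_nat q = (0 :: 'a alg_closure)"
    using even_q by (simp add: of_nat_eq_0_iff_char_dvd CHAR_eq_2)
  hence "pderiv (to_ac_poly (trinomial j)) = 1"
    using assms by (auto simp: trinomial_def to_ac_poly_add to_ac_poly_monom pderiv_add pderiv_monom)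
  hence "to_ac_poly (trinomial j) = (\<Prod>z | poly (to_ac_poly (trinomial j)) z = 0. [:-z, 1:])"
    and "card {z. poly (to_ac_poly (trinomial j)) z = 0} = degree (to_ac_poly (trinomial j))"
    using monic_separable_eq_prod_roots[of "to_ac_poly (trinomial j)"] lead
    by (simp_all add: coeff_map_poly)
  thus "to_ac_poly (trinomial j) = (\<Prod>z\<in>ac_roots (trinomial j). [:-z, 1:])"
    and "card (ac_roots (trinomial j)) = q ^ 3"
    by (simp_all add: ac_roots_def deg)
qed

lemma frob_shift_relation:
  assumes "frob a z = frob b z + frob c z"
  shows "frob (i + a) z = frob (i + b) z + frob (i + c) z"
  using arg_cong[OF assms, of "frob i"] by (simp add: frob_add frob_frob)

lemma trinomial1_orbit:
  assumes "frob 3 z = frob 1 z + z"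
  shows "frob 4 z = frob 1 z + frob 2 z" and "frob 5 z = z + frob 1 z + frob 2 z"
    and "frob 6 z = z + frob 2 z" and "frob 7 z = z"
proof -
  have step: "frob (i + 3) z = frob (i + 1) z + frob i z" for i
    using frob_shift_relation[of 3 z 1 0 i] assms by simp
  show 4: "frob 4 z = frob 1 z + frob 2 z"
    using step[of 1] by (simp add: ac_simps eval_nat_numeral)
  show 5: "frob 5 z = z + frob 1 z + frob 2 z"
    using step[of 2] assms by (simp add: ac_simps eval_nat_numeral)
  show "frob 6 z = z + frob 2 z"
    using step[of 3] assms 4 by (simp add: ac_simps eval_nat_numeral)
  show "frob 7 z = z"
    using step[of 4] 4 5 by (simp add: ac_simps eval_nat_numeral)
qed

lemma trinomial2_orbit:
  assumes "frob 3 z = frob 2 z + z"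
  shows "frob 4 z = z + frob 1 z + frob 2 z" and "frob 5 z = z + frob 1 z"
    and "frob 6 z = frob 1 z + frob 2 z" and "frob 7 z = z"
proof -
  have step: "frob (i + 3) z = frob (i + 2) z + frob i z" for i
    using frob_shift_relation[of 3 z 2 0 i] assms by simp
  show 4: "frob 4 z = z + frob 1 z + frob 2 z"
    using step[of 1] assms by (simp add: ac_simps eval_nat_numeral)
  show 5: "frob 5 z = z + frob 1 z"
    using step[of 2] 4 by (simp add: ac_simps eval_nat_numeral)
  show 6: "frob 6 z = frob 1 z + frob 2 z"
    using step[of 3] 5 assms by (simp add: ac_simps eval_nat_numeral)
  show "frob 7 z = z"
    using step[of 4] 6 4 by (simp add: ac_simps eval_nat_numeral)
qed

lemma trinomial_root_period:
  assumes "j \<in> {1, 2}" and "frob 3 z = frob j z + z"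
  shows "frob 7 z = z"
  using assms trinomial1_orbit(4) trinomial2_orbit(4) by auto

lemma trinomial_root_not_fixed:
  assumes "j \<in> {1, 2}" and "frob 3 z = frob j z + z" and "z \<noteq> 0"
  shows "frob 1 z \<noteq> z"
proof
  assume fixed: "frob 1 z = z"
  hence "frob k z = z" for k
    using frob_period_mult[OF fixed, of k] by simp
  thus False
    using assms by simp
qed

lemma trinomial_root_frob_ne_self:
  assumes "j \<in> {1, 2}" and "frob 3 z = frob j z + z" and "z \<noteq> 0" and "0 < i" and "i < 7"
  shows "frob i z \<noteq> z"
proof
  assume "frob i z = z"
  moreover have "gcd i 7 = 1"
  proof -
    have "i = 1 \<or> i = 2 \<or> i = 3 \<or> i = 4 \<or> i = 5 \<or> i = 6"
      using assms(4,5) by linarith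
    thus ?thesis
      by (elim disjE) (simp_all add: gcd_non_0_nat)
  qed
  ultimately have "frob 1 z = z"
    using frob_period_gcd[OF _ trinomial_root_period[OF assms(1,2)], of i] by simp
  thus False
    using trinomial_root_not_fixed[OF assms(1-3)] by simp
qed

lemma prod_frob_orbit_7:
  "(\<Prod>i<7. [:- frob i z, 1:]) = [:z, 1:] * [:frob 1 z, 1:] * [:frob 2 z, 1:] *
     [:frob 3 z, 1:] * [:frob 4 z, 1:] * [:frob 5 z, 1:] * [:frob 6 z, 1:]"
  by (simp add: eval_nat_numeral mult_ac)

lemma trinomial_root_orbit_prod:
  assumes "j \<in> {1, 2}" and "frob 3 z = frob j z + z"
  shows "\<exists>A B C. (\<Prod>i<7. [:- frob i z, 1:]) = S_poly A B C"
proof -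
  define a b c where "a = z" and "b = frob 1 z" and "c = frob 2 z"
  have "(\<Prod>i<7. [:- frob i z, 1:]) =
      [:a, 1:] * [:b, 1:] * [:c, 1:] * [:a+b, 1:] * [:b+c, 1:] * [:a+b+c, 1:] * [:a+c, 1:]"
  proof -
    from assms consider "frob 3 z = frob 1 z + z" | "frob 3 z = frob 2 z + z"
      by auto
    thus ?thesis
    proof cases
      case 1
      show ?thesis
        unfolding prod_frob_orbit_7 trinomial1_orbit[OF 1] 1 a_def b_def c_def
        by (simp only: ac_simps)
    next
      case 2
      show ?thesis
        unfolding prod_frob_orbit_7 trinomial2_orbit[OF 2] 2 a_def b_def c_def
        by (simp only: ac_simps)
    qed
  qed
  thus ?thesis
    using char2_span3_prod_eq_S_poly[of a b c] CHAR_eq_2 by simp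
qed

lemma trinomial_nonzero: "trinomial j \<noteq> 0"
proof
  assume "trinomial j = 0"
  hence "poly (to_ac_poly (trinomial j)) 1 = 0"
    by simp
  moreover have "poly (to_ac_poly (trinomial j)) 1 = 1"
    by (simp only: poly_trinomial frob_one add_self_eq_0 add_0_left)
  ultimately show False
    by simp
qed

lemma ex_S_set_with_ac_root:
  assumes "j \<in> {1, 2}" and "z \<in> ac_roots (trinomial j)" and "z \<noteq> 0"
  shows "\<exists>f\<in>S_set. z \<in> ac_roots f"
proof -
  have rel: "frob 3 z = frob j z + z"
    using assms(2) by (simp add: ac_roots_trinomial_iff)
  have "poly (to_ac_poly (trinomial j)) z = 0"
    using assms(2) by (simp add: ac_roots_def)
  then obtain h where h: "irreducible h" "lead_coeff h = 1" "poly (to_ac_poly h) z = 0"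
    using minimal_polynomial_exists[OF trinomial_nonzero] by blast
  note orbit = irreducible_to_ac_poly_eq_orbit_prod[OF h(1,3)]
  have "h \<noteq> 0" and "\<not> is_unit h"
    using h(1) by (auto simp: Factorial_Ring.irreducible_def)
  hence "degree h \<noteq> 0"
    using is_unit_iff_degree by blast
  hence "\<not> degree h < 7"
    using trinomial_root_frob_ne_self[OF assms(1) rel assms(3)] orbit(1) by auto
  moreover have "\<not> 7 < degree h"
    using inj_onD[OF orbit(2), of 7 0] trinomial_root_period[OF assms(1) rel] by auto
  ultimately have "degree h = 7"
    by simp
  then obtain A B C where "to_ac_poly h = S_poly A B C"
    using orbit(3) h(2) trinomial_root_orbit_prod[OF assms(1) rel] by auto
  hence "h \<in> S_set"
    using h(1) to_ac_poly_eq_S_poly_imp unfolding S_set_def by blast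
  with h(3) show ?thesis
    by (auto simp: ac_roots_def)
qed

lemma orbit7_sum_relation:
  assumes period: "frob 7 z = z" and inj: "inj_on (\<lambda>i. frob i z) {..<7}"
    and "k < 7" and k: "frob k z = z + frob 1 z"
  shows "\<exists>j\<in>{1, 2}. frob 3 z = frob j z + z"
proof -
  have ne: "frob a z \<noteq> frob b z" if "a < 7" "b < 7" "a \<noteq> b" for a b
    using inj_onD[OF inj] that by blast
  have shift: "frob (i + k) z = frob i z + frob (i + 1) z" for i
    using frob_shift_relation[of k z 0 1 i] k by simp
  have z7: "frob (3 + 4) z = z" "frob (2 + 5) z = z" "frob (1 + 6) z = z"
    using period by simp_all
  have "k = 0 \<or> k = 1 \<or> k = 2 \<or> k = 3 \<or> k = 4 \<or> k = 5 \<or> k = 6"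
    using \<open>k < 7\<close> by linarith
  thus ?thesis
  proof (elim disjE)
    assume "k = 0"
    hence "z = 0"
      using k by simp
    hence "frob 1 z = frob 0 z"
      by simp
    with ne[of 1 0] show ?thesis by simp
  next
    assume "k = 1"
    hence "frob 1 z = frob 0 z"
      using k by simp
    with ne[of 1 0] show ?thesis by simp
  next
    assume "k = 2"
    hence "frob 3 z = frob 0 z"
      using shift[of 1] k by (simp add: eval_nat_numeral)
    with ne[of 3 0] show ?thesis by simp
  next
    assume "k = 3"
    thus ?thesis
      using k by (auto simp: add.commute)
  next
    assume "k = 4"
    hence "frob 1 z = frob 3 z"
      using shift[of 3] k z7(1) by (simp add: eq_add_swap eval_nat_numeral)
    with ne[of 1 3] show ?thesis by simp
  next
    assume "k = 5"
    hence "frob 3 z = frob 2 z + z"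
      using shift[of 2] z7(2) by (simp add: eq_add_swap eval_nat_numeral)
    thus ?thesis by auto
  next
    assume "k = 6"
    hence "frob 2 z = frob 6 z"
      using shift[of 1] k z7(3) by (simp add: eq_add_swap add.commute eval_nat_numeral)
    with ne[of 2 6] show ?thesis by simp
  qed
qed

lemma S_set_orbit:
  assumes "f \<in> S_set" and "z \<in> ac_roots f"
  shows "frob 7 z = z" and "inj_on (\<lambda>i. frob i z) {..<7}"
    and "to_ac_poly f = (\<Prod>i<7. [:- frob i z, 1:])"
    and "ac_roots f = (\<lambda>i. frob i z) ` {..<7}"
proof -
  have irr: "irreducible f"
    using assms(1) by (simp add: S_set_def)
  have "poly (to_ac_poly f) z = 0"
    using assms(2) by (simp add: ac_roots_def)
  note orbit = irreducible_to_ac_poly_eq_orbit_prod[OF irr this]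
  show "frob 7 z = z" and "inj_on (\<lambda>i. frob i z) {..<7}"
    and prod: "to_ac_poly f = (\<Prod>i<7. [:- frob i z, 1:])"
    using orbit by (simp_all add: S_set_degree[OF assms(1)])
  show "ac_roots f = (\<lambda>i. frob i z) ` {..<7}"
    by (auto simp: ac_roots_def prod poly_prod eq_iff_add_eq_0[symmetric])
qed

lemma S_set_ac_roots_subset:
  assumes "f \<in> S_set"
  shows "ac_roots f \<subseteq> (ac_roots (trinomial 1) \<union> ac_roots (trinomial 2)) - {0}"
proof
  fix z assume z: "z \<in> ac_roots f"
  note orbit = S_set_orbit[OF assms z]
  obtain a b c where f: "f = S_poly a b c"
    using assms by (auto simp: S_set_def)
  have roots: "poly (S_poly (to_ac a) (to_ac b) (to_ac c)) x = 0" if "x \<in> ac_roots f" for x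
    using that unfolding ac_roots_def f to_ac_poly_S_poly mem_Collect_eq .
  have "frob 1 z \<noteq> z"
    using inj_onD[OF orbit(2), of 1 0] by auto
  hence "z + frob 1 z \<noteq> 0"
    using eq_iff_add_eq_0[of z "frob 1 z"] by auto
  hence "poly (S_poly (to_ac a) (to_ac b) (to_ac c)) (z + frob 1 z) = 0"
    using roots[of z] roots[of "frob 1 z"] z orbit(4)
    by (intro char2_S_poly_roots_add) (auto simp: CHAR_eq_2)
  hence "z + frob 1 z \<in> ac_roots f"
    unfolding ac_roots_def f to_ac_poly_S_poly mem_Collect_eq .
  then obtain k where "k < 7" and "frob k z = z + frob 1 z"
    using orbit(4) by auto
  hence "\<exists>j\<in>{1, 2}. z \<in> ac_roots (trinomial j)"
    using orbit7_sum_relation[OF orbit(1,2)] by (auto simp: ac_roots_trinomial_iff)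
  moreover have "z \<noteq> 0"
    using \<open>frob 1 z \<noteq> z\<close> by auto
  ultimately show "z \<in> (ac_roots (trinomial 1) \<union> ac_roots (trinomial 2)) - {0}"
    by auto
qed

lemma S_set_splits:
  assumes "(f :: 'a poly) \<in> S_set"
  shows "to_ac_poly f = (\<Prod>x\<in>ac_roots f. [:- x, 1:])" and "card (ac_roots f) = 7"
proof -
  have "degree (to_ac_poly f) = 7"
    using S_set_degree[OF assms] by simp
  then obtain z where "z \<in> ac_roots f"
    using alg_closed_imp_poly_has_root[of "to_ac_poly f"] by (auto simp: ac_roots_def)
  note orbit = S_set_orbit[OF assms this]
  show "to_ac_poly f = (\<Prod>x\<in>ac_roots f. [:- x, 1:])"
    by (simp add: orbit(3,4) prod.reindex[OF orbit(2)])
  show "card (ac_roots f) = 7"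
    by (simp add: orbit(4) card_image[OF orbit(2)])
qed

lemma ac_roots_trinomial_inter: "ac_roots (trinomial 1) \<inter> ac_roots (trinomial 2) = {0}"
proof (intro equalityI subsetI)
  fix z assume "z \<in> ac_roots (trinomial 1) \<inter> ac_roots (trinomial 2)"
  hence rel: "frob 3 z = frob 1 z + z" and eq: "frob 1 z = frob 2 z"
    by (auto simp: ac_roots_trinomial_iff)
  have "frob 1 (frob 1 z) = frob 2 z"
    by (simp add: frob_frob eval_nat_numeral)
  hence "frob 1 (frob 1 z) = frob 1 z"
    using eq by simp
  hence "frob 1 z = z"
    by simp
  thus "z \<in> {0}"
    using trinomial_root_not_fixed[of 1 z] rel by auto
qed (simp add: ac_roots_trinomial_iff)

lemma UN_S_set_ac_roots_dvd:
  assumes "j \<in> {1, 2}"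
  shows "(\<Union>f\<in>{f \<in> S_set. f dvd trinomial j}. ac_roots f) = ac_roots (trinomial j) - {0}"
proof (intro equalityI subsetI)
  fix z assume "z \<in> (\<Union>f\<in>{f \<in> S_set. f dvd trinomial j}. ac_roots f)"
  then obtain f where "f \<in> S_set" "f dvd trinomial j" "z \<in> ac_roots f"
    by blast
  thus "z \<in> ac_roots (trinomial j) - {0}"
    using S_set_ac_roots_subset ac_roots_mono_dvd by blast
next
  fix z assume z: "z \<in> ac_roots (trinomial j) - {0}"
  then obtain f where "f \<in> S_set" "z \<in> ac_roots f"
    using ex_S_set_with_ac_root[OF assms] by blast
  moreover have "f dvd trinomial j"
    using calculation z
    by (intro irreducible_dvd_if_common_root[of f z]) (auto simp: S_set_def ac_roots_def)
  ultimately show "z \<in> (\<Union>f\<in>{f \<in> S_set. f dvd trinomial j}. ac_roots f)"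
    by blast
qed

lemma UN_S_set_ac_roots:
  "(\<Union>f\<in>S_set. ac_roots f) = (ac_roots (trinomial 1) \<union> ac_roots (trinomial 2)) - {0}"
proof
  show "(\<Union>f\<in>(S_set :: 'a poly set). ac_roots f) \<subseteq>
      (ac_roots (trinomial 1) \<union> ac_roots (trinomial 2)) - {0}"
    using S_set_ac_roots_subset by blast
  show "(ac_roots (trinomial 1) \<union> ac_roots (trinomial 2)) - {0} \<subseteq> (\<Union>f\<in>S_set. ac_roots f)"
    using ex_S_set_with_ac_root[of 1] ex_S_set_with_ac_root[of 2] by blast
qed

lemma to_ac_poly_prod_S_set:
  "to_ac_poly (\<Prod>f\<in>S_set. f) =
    (\<Prod>x\<in>(ac_roots (trinomial 1) \<union> ac_roots (trinomial 2)) - {0}. [:- x, 1:])"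
proof -
  have "to_ac_poly (\<Prod>f\<in>S_set. f) =
      (\<Prod>f\<in>(S_set :: 'a poly set). \<Prod>x\<in>ac_roots f. [:- x, 1:])"
    unfolding to_ac_poly_prod by (intro prod.cong refl S_set_splits(1))
  also have "\<dots> = (\<Prod>x\<in>(\<Union>f\<in>S_set. ac_roots f). [:- x, 1:])"
  proof (rule prod.UNION_disjoint[symmetric])
    show "finite (S_set :: 'a poly set)"
      by (rule finite_S_set)
    show "\<forall>f\<in>S_set. finite (ac_roots f)"
      by (simp add: finite_ac_roots S_set_nonzero)
    show "\<forall>f\<in>S_set. \<forall>g\<in>S_set. (f :: 'a poly) \<noteq> g \<longrightarrow> ac_roots f \<inter> ac_roots g = {}"
      using S_set_common_root_eq by blast
  qed
  finally show ?thesis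
    by (simp only: UN_S_set_ac_roots)
qed

lemma trinomial_mult_eq: "trinomial 1 * trinomial 2 = monom 1 2 * (\<Prod>f\<in>S_set. f)"
proof -
  define V W where "V = ac_roots (trinomial 1)" and "W = ac_roots (trinomial 2)"
  define lin where "lin x = [:- x, 1:]" for x :: "'a alg_closure"
  have fin: "finite V" "finite W"
    unfolding V_def W_def using finite_ac_roots trinomial_nonzero by blast+
  have "to_ac_poly (trinomial 1 * trinomial 2) = (\<Prod>x\<in>V. lin x) * (\<Prod>x\<in>W. lin x)"
    using trinomial_splits(1)[of 1] trinomial_splits(1)[of 2]
    by (simp add: to_ac_poly_mult V_def W_def lin_def)
  also have "\<dots> = (\<Prod>x\<in>V \<union> W. lin x) * (\<Prod>x\<in>V \<inter> W. lin x)"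
    using fin by (rule prod.union_inter[symmetric])
  also have "(\<Prod>x\<in>V \<inter> W. lin x) = lin 0"
    using ac_roots_trinomial_inter by (simp add: V_def W_def)
  also have "(\<Prod>x\<in>V \<union> W. lin x) = lin 0 * (\<Prod>x\<in>(V \<union> W) - {0}. lin x)"
    using fin ac_roots_trinomial_inter by (intro prod.remove) (auto simp: V_def W_def)
  finally have "to_ac_poly (trinomial 1 * trinomial 2) =
      lin 0 * lin 0 * (\<Prod>x\<in>(V \<union> W) - {0}. lin x)"
    by (simp only: mult_ac)
  also have "lin 0 * lin 0 = to_ac_poly (monom 1 2)"
    unfolding to_ac_poly_monom by (simp add: lin_def monom_altdef power2_eq_square)
  also have "(\<Prod>x\<in>(V \<union> W) - {0}. lin x) = to_ac_poly (\<Prod>f\<in>S_set. f)"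
    by (simp only: to_ac_poly_prod_S_set V_def W_def lin_def)
  finally show ?thesis
    by (simp flip: to_ac_poly_mult)
qed

lemma card_S_set_dvd_trinomial:
  assumes "j \<in> {1, 2}"
  shows "card {f \<in> S_set. f dvd trinomial j} = (q ^ 3 - 1) div 7"
proof -
  have "q ^ 3 - 1 = card (ac_roots (trinomial j) - {0})"
    using trinomial_splits(2)[OF assms] finite_ac_roots[OF trinomial_nonzero]
    by (simp add: card_Diff_singleton ac_roots_trinomial_iff)
  also have "\<dots> = (\<Sum>f\<in>{f \<in> S_set. f dvd trinomial j}. card (ac_roots f))"
    unfolding UN_S_set_ac_roots_dvd[OF assms, symmetric]
  proof (rule card_UN_disjoint)
    show "finite {f \<in> S_set. f dvd trinomial j}"
      by (rule finite_subset[OF _ finite_S_set]) blast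
    show "\<forall>f\<in>{f \<in> S_set. f dvd trinomial j}. finite (ac_roots f)"
      by (simp add: finite_ac_roots S_set_nonzero)
    show "\<forall>f\<in>{f \<in> S_set. f dvd trinomial j}. \<forall>g\<in>{f \<in> S_set. f dvd trinomial j}.
        f \<noteq> g \<longrightarrow> ac_roots f \<inter> ac_roots g = {}"
      using S_set_common_root_eq by blast
  qed
  also have "\<dots> = (\<Sum>f\<in>{f \<in> S_set. f dvd trinomial j}. 7)"
    by (intro sum.cong refl) (simp add: S_set_splits(2))
  also have "\<dots> = 7 * card {f \<in> S_set. f dvd trinomial j}"
    by simp
  finally show ?thesis
    by simp
qed

end

theorem lemma1p10:
  fixes q :: nat
  assumes "q = card (UNIV :: 'a::{field,finite} set)"
    and "\<exists>m. q = 2 ^ m"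
  shows "(P0 q :: 'a poly) * P1 q = monom 1 2 * (\<Prod>f\<in>S_set. f)
       \<and> card {f \<in> (S_set :: 'a poly set). f dvd P0 q} = (q^3 - 1) div 7
       \<and> card {f \<in> (S_set :: 'a poly set). f dvd P1 q} = (q^3 - 1) div 7"
proof -
  obtain m where m: "q = 2 ^ m"
    using assms(2) by blast
  hence "CHAR('a) = 2"
    using CHAR_eq_prime_if_card_eq_power[of 2 m] assms(1) by simp
  then interpret char2_finite_field_closure "TYPE('a)" q
    by unfold_locales (use assms(1) m in \<open>auto intro: exI[of _ m]\<close>)
  show ?thesis
    using trinomial_mult_eq card_S_set_dvd_trinomial[of 1] card_S_set_dvd_trinomial[of 2]
    by (simp add: P0_eq_trinomial P1_eq_trinomial)
qed

end
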